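(* Let $(C,T,k)$ be a $(\rho,\alpha,n)$-coding gadget over $\mathbb{R}$ with $C\subseteq\mathbb{R}^N$, and let $Q_1,\dots,Q_m\in\mathbb{R}^{n\times n}$, $b_1,\dots,b_m\in\mathbb{R}$. Let $V\subseteq \mathbb{R}^{N\times N}\times\mathbb{R}$ be the set of pairs $(Y,z)$ satisfying $$Y\in C\otimes C,\quad Y=Y^T,\quad z=\tfrac1k\sum_{i\in[N]}Y[i,i],\quad Q_\ell(TYT^T)=z\,b_\ell\ \ \forall \ell\in[m].$$ Then: (i) if there exists $x\in\{0,1\}^n$ with $Q_\ell(xx^T)=b_\ell$ for all $\ell$, then $V$ contains a nonzero $(Y,z)$ with all entries in $\{0,1\}$ and $\|(Y,z)\|_0 = k^2+1\le \rho^2 d(C)^2+1$; (ii) if there is no $x\in\mathbb{R}^n$ with $Q_\ell(xx^T)=b_\ell$ for all $\ell$, then every nonzero $(Y,z)\in V$ satisfies $\|(Y,z)\|_0\ge \alpha\, d(C)^2$.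
   Context: For $Q,X$ square matrices of equal size, $Q(X):=\sum_{i,j}Q[i,j]X[i,j]$. $\|(Y,z)\|_0$ is the number of nonzero entries of $Y$ plus $1$ if $z\ne0$. For subspaces $U,W$, $U\otimes W$ is the space of matrices whose columns lie in $U$ and rows in $W$. $H^N_k := \{x\in\{0,1\}^N : \|x\|_0 = k\}$; $d(C):=\min_{u\in C\setminus\{0\}}\|u\|_0$; $C$ is $\alpha$-non-overlapping if for all linearly independent $u,v\in C$, $|\mathrm{supp}(u)\cup\mathrm{supp}(v)|\ge\alpha\, d(C)$. A triple $(C,T,k)$ is a $(\rho,\alpha,n)$-coding gadget over $\mathbb{R}$ if $C\subseteq\mathbb{R}^N$ is a subspace, $T\in\mathbb{R}^{n\times N}$, $k\le\rho\, d(C)$, $T(C\cap H^N_k)\supseteq\{0,1\}^n$, and $C$ is $\alpha$-non-overlapping. *)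

theory Defs
  imports "HOL-Analysis.Analysis"
begin

text \<open>Vectors in R^N are real^'N, matrices in R^(a x b) are real^'b^'a (row i = Y$i).\<close>

definition vsupp :: "real^'N \<Rightarrow> 'N set" where
  "vsupp u = {i. u $ i \<noteq> 0}"

definition min_dist :: "(real^'N) set \<Rightarrow> nat" where
  "min_dist C = (INF u \<in> C - {0}. card (vsupp u))"

definition non_overlapping :: "real \<Rightarrow> (real^'N) set \<Rightarrow> bool" where
  "non_overlapping \<alpha> C \<longleftrightarrow>
     (\<forall>u\<in>C. \<forall>v\<in>C. (u \<noteq> v \<and> independent {u, v}) \<longrightarrow>
        real (card (vsupp u \<union> vsupp v)) \<ge> \<alpha> * real (min_dist C))"

definition is01 :: "real^'n \<Rightarrow> bool" where
  "is01 x \<longleftrightarrow> (\<forall>i. x $ i \<in> {0, 1})"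

definition coding_gadget ::
  "real \<Rightarrow> real \<Rightarrow> (real^'N) set \<Rightarrow> real^'N^'n \<Rightarrow> nat \<Rightarrow> bool" where
  "coding_gadget \<rho> \<alpha> C T k \<longleftrightarrow>
     subspace C \<and>
     real k \<le> \<rho> * real (min_dist C) \<and>
     (\<forall>x::real^'n. is01 x \<longrightarrow>
        (\<exists>u\<in>C. is01 u \<and> card (vsupp u) = k \<and> T *v u = x)) \<and>
     non_overlapping \<alpha> C"

definition mat_pair :: "real^'n^'n \<Rightarrow> real^'n^'n \<Rightarrow> real" where
  "mat_pair Q X = (\<Sum>i\<in>UNIV. \<Sum>j\<in>UNIV. Q $ i $ j * X $ i $ j)"

definition outer :: "real^'n \<Rightarrow> real^'n^'n" where
  "outer x = (\<chi> i j. x $ i * x $ j)"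

definition tensor_sp :: "(real^'N) set \<Rightarrow> (real^'N^'N) set" where
  "tensor_sp C = {Y. (\<forall>j. (\<chi> i. Y $ i $ j) \<in> C) \<and> (\<forall>i. Y $ i \<in> C)}"

definition l0_pair :: "real^'N^'N \<Rightarrow> real \<Rightarrow> nat" where
  "l0_pair Y z = card {(i, j). Y $ i $ j \<noteq> 0} + (if z \<noteq> 0 then 1 else 0)"

definition relaxV ::
  "(real^'N) set \<Rightarrow> real^'N^'n \<Rightarrow> nat \<Rightarrow> nat \<Rightarrow> (nat \<Rightarrow> real^'n^'n) \<Rightarrow> (nat \<Rightarrow> real)
     \<Rightarrow> ((real^'N^'N) \<times> real) set" where
  "relaxV C T k m Q b = {(Y, z).
     Y \<in> tensor_sp C \<and> transpose Y = Y \<and>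
     z = (1 / real k) * (\<Sum>i\<in>UNIV. Y $ i $ i) \<and>
     (\<forall>l<m. mat_pair (Q l) (T ** Y ** transpose T) = z * b l)}"

end

theory Submission
  imports Defs
begin

text \<open>Completeness: a 0/1 solution x is encoded by a 0/1 codeword u of weight k with T u = x,
  and (u u^T, 1) is a feasible point of weight k^2 + 1.
  Soundness: if two rows of a feasible Y are linearly independent, non-overlapping gives
  \<alpha> d(C) columns of Y that are nonzero codewords, hence \<alpha> d(C)^2 nonzero entries.
  Otherwise the symmetric matrix Y has rank one, Y = c u u^T, and a rescaling of T u
  solves the quadratic system, which is excluded.\<close>

lemma matrix_sandwich_outer: "T ** outer u ** transpose T = outer (T *v u)"
  by (simp add: vec_eq_iff matrix_matrix_mult_def matrix_vector_mult_def outer_def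
      transpose_def sum_product sum_distrib_left sum_distrib_right mult_ac)

lemma matrix_sandwich_scaleR:
  fixes T :: "real^'N^'n" and M :: "real^'N^'N"
  shows "T ** (c *\<^sub>R M) ** transpose T = c *\<^sub>R (T ** M ** transpose T)"
  by (simp add: vec_eq_iff matrix_matrix_mult_def transpose_def
      sum_distrib_left sum_distrib_right mult_ac)

lemma mat_pair_scaleR: "mat_pair Q (c *\<^sub>R M) = c * mat_pair Q M"
  by (simp add: mat_pair_def sum_distrib_left mult_ac)

lemma outer_scaleR: "outer (c *\<^sub>R x) = c\<^sup>2 *\<^sub>R outer x"
  by (simp add: outer_def vec_eq_iff power2_eq_square mult_ac)

lemma transpose_outer: "transpose (outer u) = outer u"
  by (simp add: outer_def transpose_def vec_eq_iff mult.commute)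

lemma outer_in_tensor_sp:
  assumes "subspace C" "u \<in> C"
  shows "outer u \<in> tensor_sp C"
proof -
  have "(\<chi> i. outer u $ i $ j) = u $ j *\<^sub>R u" "outer u $ i = u $ i *\<^sub>R u" for i j
    by (simp_all add: outer_def vec_eq_iff mult.commute)
  then show ?thesis
    unfolding tensor_sp_def using assms by (simp add: subspace_scale)
qed

lemma nonzero_entries_outer: "{(i, j). outer u $ i $ j \<noteq> 0} = vsupp u \<times> vsupp u"
  by (auto simp: outer_def vsupp_def)

lemma trace_outer_is01:
  assumes "is01 u"
  shows "(\<Sum>i\<in>UNIV. outer u $ i $ i) = real (card (vsupp u))"
proof -
  have "outer u $ i $ i = (if i \<in> vsupp u then 1 else 0)" for i
    using assms by (auto simp: is01_def outer_def vsupp_def)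
  then show ?thesis by (simp add: sum.If_cases)
qed

lemma min_dist_le_card_vsupp:
  assumes "u \<in> C" "u \<noteq> 0"
  shows "min_dist C \<le> card (vsupp u)"
  unfolding min_dist_def by (rule cINF_lower) (use assms in auto)

lemma vsupp_eq_empty_iff: "vsupp u = {} \<longleftrightarrow> u = 0"
  by (auto simp: vsupp_def vec_eq_iff)

lemma coding_gadget_weight_pos:
  assumes "coding_gadget \<rho> \<alpha> C (T :: real^'N^'n) k"
  shows "k \<noteq> 0"
proof
  assume "k = 0"
  have "is01 (1 :: real^'n)" by (simp add: is01_def)
  then obtain u where u: "card (vsupp u) = k" "T *v u = 1"
    using assms unfolding coding_gadget_def by blast
  with \<open>k = 0\<close> have "u = 0"
    by (simp add: card_eq_0_iff vsupp_eq_empty_iff)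
  with u show False by (simp add: vec_eq_iff)
qed

lemma card_nonzero_entries_ge_columns:
  fixes Y :: "real^'N^'N"
  assumes "\<And>j. j \<in> J \<Longrightarrow> (\<chi> i. Y $ i $ j) \<in> C" "\<And>j. j \<in> J \<Longrightarrow> (\<chi> i. Y $ i $ j) \<noteq> 0"
  shows "card J * min_dist C \<le> card {(i, j). Y $ i $ j \<noteq> 0}"
proof -
  define col where "col j = (\<chi> i. Y $ i $ j)" for j
  have "min_dist C \<le> card (vsupp (col j))" if "j \<in> J" for j
    using assms that by (simp add: col_def min_dist_le_card_vsupp)
  then have "card J * min_dist C \<le> (\<Sum>j\<in>J. card (vsupp (col j)))"
    using sum_bounded_below[of J "min_dist C" "\<lambda>j. card (vsupp (col j))"] by simp
  also have "\<dots> = card (SIGMA j:J. vsupp (col j))"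
    by (rule card_SigmaI[symmetric]) auto
  also have "\<dots> = card ((\<lambda>(j, i). (i, j)) ` (SIGMA j:J. vsupp (col j)))"
    by (rule card_image[symmetric]) (auto simp: inj_on_def)
  also have "\<dots> \<le> card {(i, j). Y $ i $ j \<noteq> 0}"
    by (rule card_mono) (auto simp: col_def vsupp_def)
  finally show ?thesis .
qed

lemma symmetric_rank_one:
  fixes Y :: "real^'N^'N"
  assumes symm: "transpose Y = Y" and row: "Y $ i0 \<noteq> 0"
    and dep: "\<And>i1 i2. Y $ i1 \<noteq> Y $ i2 \<Longrightarrow> \<not> independent {Y $ i1, Y $ i2}"
  shows "\<exists>c. Y = c *\<^sub>R outer (Y $ i0)"
proof -
  define u where "u = Y $ i0"
  have "\<exists>c. Y $ i = c *\<^sub>R u" for i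
  proof (cases "Y $ i = u")
    case True
    then show ?thesis by (metis scaleR_one)
  next
    case False
    with dep[of i i0] row have "Y $ i \<in> span {u}"
      by (auto simp: u_def independent_insert)
    then show ?thesis by (auto simp: span_singleton)
  qed
  then obtain c where c: "\<And>i. Y $ i = c i *\<^sub>R u" by metis
  obtain p where p: "u $ p \<noteq> 0" using row by (auto simp: u_def vec_eq_iff)
  have sym: "Y $ i $ j = Y $ j $ i" for i j
    using arg_cong[OF symm, of "\<lambda>M. M $ j $ i"] by (simp add: transpose_def)
  define s where "s = c p / u $ p"
  have "c i = s * u $ i" for i
  proof -
    have "c i * u $ p = c p * u $ i"
      using sym[of i p] c[of i] c[of p] by simp
    with p show ?thesis by (simp add: s_def field_simps)
  qed
  then have "Y = s *\<^sub>R outer u"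
    by (simp add: vec_eq_iff outer_def c)
  then show ?thesis unfolding u_def by blast
qed

lemma relaxV_rank_one_solution:
  assumes "(c *\<^sub>R outer u, z) \<in> relaxV C T k m Q b" "c \<noteq> 0" "u \<noteq> 0" "k \<noteq> 0"
  shows "\<exists>x. \<forall>l<m. mat_pair (Q l) (outer x) = b l"
proof -
  define S where "S = (\<Sum>i\<in>UNIV. u $ i * u $ i)"
  obtain p where "u $ p \<noteq> 0" using assms(3) by (auto simp: vec_eq_iff)
  then have "0 < u $ p * u $ p" by (simp add: not_square_less_zero less_le)
  also have "\<dots> \<le> S" unfolding S_def by (rule member_le_sum) auto
  finally have "S > 0" .
  have "z = 1 / real k * (\<Sum>i\<in>UNIV. (c *\<^sub>R outer u) $ i $ i)"
    and cons: "\<And>l. l < m \<Longrightarrow> mat_pair (Q l) (T ** (c *\<^sub>R outer u) ** transpose T) = z * b l"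
    using assms(1) unfolding relaxV_def by auto
  then have z: "z = c * S / real k"
    by (simp add: S_def outer_def sum_distrib_left sum_divide_distrib)
  define x where "x = sqrt (real k / S) *\<^sub>R (T *v u)"
  have "mat_pair (Q l) (outer x) = b l" if "l < m" for l
  proof -
    have "c * mat_pair (Q l) (outer (T *v u)) = c * (S / real k * b l)"
      using cons[OF that] by (simp add: z matrix_sandwich_scaleR matrix_sandwich_outer mat_pair_scaleR)
    with assms(2) have "mat_pair (Q l) (outer (T *v u)) = S / real k * b l"
      using mult_left_cancel by blast
    then show ?thesis
      using \<open>S > 0\<close> assms(4) by (simp add: x_def outer_scaleR mat_pair_scaleR)
  qed
  then show ?thesis by blast
qed

lemma relaxV_completeness:
  assumes gadget: "coding_gadget \<rho> \<alpha> C T k"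
    and u: "u \<in> C" "is01 u" "card (vsupp u) = k"
    and x: "\<forall>l<m. mat_pair (Q l) (outer (T *v u)) = b l"
  shows "(outer u, 1) \<in> relaxV C T k m Q b" "\<forall>i j. outer u $ i $ j \<in> {0, 1}"
    "l0_pair (outer u) 1 = k ^ 2 + 1"
proof -
  have "k \<noteq> 0" and "subspace C"
    using gadget coding_gadget_weight_pos unfolding coding_gadget_def by blast+
  then show "(outer u, 1) \<in> relaxV C T k m Q b"
    using u x by (simp add: relaxV_def outer_in_tensor_sp transpose_outer
        trace_outer_is01 matrix_sandwich_outer)
  show "\<forall>i j. outer u $ i $ j \<in> {0, 1}"
  proof (intro allI)
    fix i j
    have "u $ i \<in> {0, 1}" "u $ j \<in> {0, 1}" using u(2) by (auto simp: is01_def)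
    then show "outer u $ i $ j \<in> {0, 1}" by (auto simp: outer_def)
  qed
  show "l0_pair (outer u) 1 = k ^ 2 + 1"
    using u(3) by (simp add: l0_pair_def nonzero_entries_outer power2_eq_square)
qed

lemma l0_pair_ge_of_independent_rows:
  assumes "non_overlapping \<alpha> C" "Y \<in> tensor_sp C"
    and "Y $ i1 \<noteq> Y $ i2" "independent {Y $ i1, Y $ i2}"
  shows "\<alpha> * real (min_dist C) ^ 2 \<le> real (l0_pair Y z)"
proof -
  define J where "J = vsupp (Y $ i1) \<union> vsupp (Y $ i2)"
  have rows: "Y $ i \<in> C" and cols: "(\<chi> i. Y $ i $ j) \<in> C" for i j
    using assms(2) unfolding tensor_sp_def by auto
  have "\<alpha> * real (min_dist C) \<le> real (card J)"
    using assms(1,3,4) rows unfolding non_overlapping_def J_def by blast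
  moreover have "(\<chi> i. Y $ i $ j) \<noteq> 0" if "j \<in> J" for j
    using that by (auto simp: J_def vsupp_def vec_eq_iff)
  then have "card J * min_dist C \<le> l0_pair Y z"
    using card_nonzero_entries_ge_columns[of J Y C] cols unfolding l0_pair_def by fastforce
  ultimately have "(\<alpha> * real (min_dist C)) * real (min_dist C) \<le> real (l0_pair Y z)"
    by (smt (verit) mult_right_mono of_nat_0_le_iff of_nat_le_iff of_nat_mult)
  then show ?thesis by (simp add: power2_eq_square mult.assoc)
qed

lemma relaxV_soundness:
  assumes gadget: "coding_gadget \<rho> \<alpha> C T k"
    and no_solution: "\<not> (\<exists>x. \<forall>l<m. mat_pair (Q l) (outer x) = b l)"
    and YV: "(Y, z) \<in> relaxV C T k m Q b" and nonzero: "(Y, z) \<noteq> (0, 0)"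
  shows "\<alpha> * real (min_dist C) ^ 2 \<le> real (l0_pair Y z)"
proof (cases "\<exists>i1 i2. Y $ i1 \<noteq> Y $ i2 \<and> independent {Y $ i1, Y $ i2}")
  case True
  moreover have "non_overlapping \<alpha> C" using gadget unfolding coding_gadget_def by blast
  moreover have "Y \<in> tensor_sp C" using YV unfolding relaxV_def by blast
  ultimately show ?thesis using l0_pair_ge_of_independent_rows by blast
next
  case False
  have "Y \<noteq> 0" using YV nonzero unfolding relaxV_def by auto
  then obtain i0 where "Y $ i0 \<noteq> 0" by (auto simp: vec_eq_iff)
  moreover have "transpose Y = Y" using YV unfolding relaxV_def by blast
  ultimately obtain c where Y: "Y = c *\<^sub>R outer (Y $ i0)"
    using symmetric_rank_one False by blast
  with \<open>Y \<noteq> 0\<close> have "c \<noteq> 0" by auto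
  then have "\<exists>x. \<forall>l<m. mat_pair (Q l) (outer x) = b l"
    using relaxV_rank_one_solution[of c "Y $ i0" z] YV Y \<open>Y $ i0 \<noteq> 0\<close>
      coding_gadget_weight_pos[OF gadget] by simp
  with no_solution show ?thesis by blast
qed

theorem mainTheorem10:
  fixes C :: "(real^'N) set" and T :: "real^'N^'n" and k :: nat
    and \<rho> \<alpha> :: real and m :: nat
    and Q :: "nat \<Rightarrow> real^'n^'n" and b :: "nat \<Rightarrow> real"
  assumes gadget: "coding_gadget \<rho> \<alpha> C T k"
  shows "((\<exists>x::real^'n. is01 x \<and> (\<forall>l<m. mat_pair (Q l) (outer x) = b l)) \<longrightarrow>
            (\<exists>(Y, z) \<in> relaxV C T k m Q b. (Y, z) \<noteq> (0, 0) \<and>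
               (\<forall>i j. Y $ i $ j \<in> {0, 1}) \<and> z \<in> {0, 1} \<and>
               l0_pair Y z = k ^ 2 + 1 \<and>
               real (k ^ 2 + 1) \<le> \<rho> ^ 2 * real (min_dist C) ^ 2 + 1))
       \<and> ((\<not> (\<exists>x::real^'n. \<forall>l<m. mat_pair (Q l) (outer x) = b l)) \<longrightarrow>
            (\<forall>(Y, z) \<in> relaxV C T k m Q b. (Y, z) \<noteq> (0, 0) \<longrightarrow>
               real (l0_pair Y z) \<ge> \<alpha> * real (min_dist C) ^ 2))"
proof (intro conjI impI)
  assume "\<exists>x. is01 x \<and> (\<forall>l<m. mat_pair (Q l) (outer x) = b l)"
  then obtain u where u: "u \<in> C" "is01 u" "card (vsupp u) = k"
    and solves: "\<forall>l<m. mat_pair (Q l) (outer (T *v u)) = b l"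
    using gadget unfolding coding_gadget_def by metis
  have "real k \<le> \<rho> * real (min_dist C)" using gadget unfolding coding_gadget_def by blast
  then have "real k ^ 2 \<le> (\<rho> * real (min_dist C)) ^ 2" by (intro power_mono) auto
  then have "real (k ^ 2 + 1) \<le> \<rho> ^ 2 * real (min_dist C) ^ 2 + 1"
    by (simp add: power_mult_distrib)
  with relaxV_completeness[OF gadget u solves]
  show "\<exists>(Y, z) \<in> relaxV C T k m Q b. (Y, z) \<noteq> (0, 0) \<and>
          (\<forall>i j. Y $ i $ j \<in> {0, 1}) \<and> z \<in> {0, 1} \<and> l0_pair Y z = k ^ 2 + 1 \<and>
          real (k ^ 2 + 1) \<le> \<rho> ^ 2 * real (min_dist C) ^ 2 + 1"
    by (intro bexI[of _ "(outer u, 1)"]) auto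
qed (use relaxV_soundness[OF gadget] in blast)

end
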